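(* Let $\mathcal H_{AB}=\mathcal H_A\otimes\mathcal H_B$ be finite dimensional and define, for full-rank $\rho_{AB},\sigma_{AB}\in\mathcal S_{AB}$, $D^E_A(\rho_{AB}\|\sigma_{AB}):=D(\rho_{AB}\|\mathbb E^*_A(\rho_{AB}))$. Then for all such $\rho_{AB},\sigma_{AB}$: (1) $\rho_{AB}\mapsto D^E_A(\rho_{AB}\|\sigma_{AB})$ is continuous; (2) $D^E_A(\rho_{AB}\|\sigma_{AB})\ge0$, with equality iff $\rho_{AB}=\mathbb E^*_A(\rho_{AB})$; (3) $D^E_A(\rho_{AB}\|\sigma_A\otimes\sigma_B)\ge D(\rho_A\|\sigma_A)$; (3.1) $D^E_A(\rho_A\otimes\rho_B\|\sigma_A\otimes\sigma_B)=D(\rho_A\|\sigma_A)$.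
   Context: $D(\rho\|\sigma)=\operatorname{tr}[\rho(\log\rho-\log\sigma)]$. Reduced states $\rho_B=\operatorname{tr}_A\rho_{AB}$, and operators on one factor are tensored with the identity on the other when multiplied with operators on $AB$. $\mathbb E^*_A(\rho_{AB}) := \sigma_{AB}^{1/2}\,(\mathbb 1_A\otimes\sigma_B^{-1/2}\rho_B\sigma_B^{-1/2})\,\sigma_{AB}^{1/2}$ (depending on the fixed full-rank state $\sigma_{AB}$). *)

theory Defs
  imports "HOL-Analysis.Analysis"
begin

type_synonym 'n cmat = "complex^'n^'n"

definition adj :: "'n::finite cmat \<Rightarrow> 'n cmat" where
  "adj A = (\<chi> i j. cnj (A $ j $ i))"

definition hermitian :: "'n::finite cmat \<Rightarrow> bool" where
  "hermitian A \<longleftrightarrow> adj A = A"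

definition unitary :: "'n::finite cmat \<Rightarrow> bool" where
  "unitary U \<longleftrightarrow> U ** adj U = mat 1 \<and> adj U ** U = mat 1"

definition qform :: "'n::finite cmat \<Rightarrow> complex^'n \<Rightarrow> complex" where
  "qform A x = (\<Sum>i\<in>UNIV. \<Sum>j\<in>UNIV. cnj (x $ i) * A $ i $ j * x $ j)"

definition pos_def :: "'n::finite cmat \<Rightarrow> bool" where
  "pos_def A \<longleftrightarrow> hermitian A \<and> (\<forall>x. x \<noteq> 0 \<longrightarrow> Im (qform A x) = 0 \<and> Re (qform A x) > 0)"

definition full_rank_state :: "'n::finite cmat \<Rightarrow> bool" where
  "full_rank_state \<rho> \<longleftrightarrow> pos_def \<rho> \<and> trace \<rho> = 1"

definition rdiag :: "('n::finite \<Rightarrow> real) \<Rightarrow> 'n cmat" where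
  "rdiag d = (\<chi> i j. if i = j then complex_of_real (d i) else 0)"

text \<open>Functional calculus for Hermitian matrices via the spectral decomposition
  (the result is independent of the chosen decomposition).\<close>
definition mfun :: "(real \<Rightarrow> real) \<Rightarrow> 'n::finite cmat \<Rightarrow> 'n cmat" where
  "mfun f A = (SOME B. \<exists>U d. unitary U \<and> A = U ** rdiag d ** adj U
                         \<and> B = U ** rdiag (f \<circ> d) ** adj U)"

definition mlog :: "'n::finite cmat \<Rightarrow> 'n cmat" where
  "mlog A = mfun ln A"

definition msqrt :: "'n::finite cmat \<Rightarrow> 'n cmat" where
  "msqrt A = mfun sqrt A"

definition minvsqrt :: "'n::finite cmat \<Rightarrow> 'n cmat" where
  "minvsqrt A = mfun (\<lambda>x. 1 / sqrt x) A"

text \<open>Umegaki relative entropy D(rho||sigma) = tr[rho (log rho - log sigma)]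
  (real-valued for the full-rank states considered).\<close>
definition rel_ent :: "'n::finite cmat \<Rightarrow> 'n cmat \<Rightarrow> real" where
  "rel_ent \<rho> \<sigma> = Re (trace (\<rho> ** (mlog \<rho> - mlog \<sigma>)))"

definition kron :: "'a::finite cmat \<Rightarrow> 'b::finite cmat \<Rightarrow> ('a \<times> 'b) cmat" where
  "kron A B = (\<chi> p q. A $ fst p $ fst q * B $ snd p $ snd q)"

text \<open>rho_B = tr_A rho_AB\<close>
definition ptrA :: "('a::finite \<times> 'b::finite) cmat \<Rightarrow> 'b cmat" where
  "ptrA \<rho> = (\<chi> j l. \<Sum>i\<in>UNIV. \<rho> $ (i,j) $ (i,l))"

text \<open>rho_A = tr_B rho_AB\<close>
definition ptrB :: "('a::finite \<times> 'b::finite) cmat \<Rightarrow> 'a cmat" where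
  "ptrB \<rho> = (\<chi> i k. \<Sum>j\<in>UNIV. \<rho> $ (i,j) $ (k,j))"

definition Estar :: "('a::finite \<times> 'b::finite) cmat \<Rightarrow> ('a \<times> 'b) cmat \<Rightarrow> ('a \<times> 'b) cmat" where
  "Estar \<sigma> \<rho> = msqrt \<sigma> **
     kron (mat 1 :: 'a cmat) (minvsqrt (ptrA \<sigma>) ** ptrA \<rho> ** minvsqrt (ptrA \<sigma>)) ** msqrt \<sigma>"

definition DEA :: "('a::finite \<times> 'b::finite) cmat \<Rightarrow> ('a \<times> 'b) cmat \<Rightarrow> real" where
  "DEA \<rho> \<sigma> = rel_ent \<rho> (Estar \<sigma> \<rho>)"

end

theory Submission
  imports Defs
begin

text \<open>
  The matrix E*_A(rho) is the congruence of
  1 \<otimes> sigma_B^(-1/2) rho_B sigma_B^(-1/2) by sigma^(1/2), hence positive definite, and by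
  cyclicity of the trace and tr[(1 \<otimes> Y) X] = tr[Y tr_A X] its trace is tr rho_B = 1.
  So (2) is Klein's inequality: writing rho = U diag(p) U* and tau = V diag(q) V*, one gets
  D(rho || tau) = \<Sum>_ij |(U* V)_ij|^2 (p_i ln p_i - p_i ln q_j) with doubly stochastic weights,
  and the scalar inequality p ln p - p ln q \<ge> p - q sums to zero on the right.
  For a product reference state the square roots cancel, E*_A(rho) = sigma_A \<otimes> rho_B, and
  since the logarithm is additive on tensor products,
  D(rho || sigma_A \<otimes> rho_B) = D(rho || rho_A \<otimes> rho_B) + D(rho_A || sigma_A);
  this gives (3) and (3.1). For (1), the functional calculus is continuous on positive definite
  matrices: along a convergent sequence, the diagonalising unitaries have convergent
  subsequences because the unitary group is compact, and the eigenvalues converge with them.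
\<close>

definition cinner :: "complex^'n::finite \<Rightarrow> complex^'n \<Rightarrow> complex" where
  "cinner x y = (\<Sum>i\<in>UNIV. cnj (x$i) * y$i)"

lemma cinner_cnj: "cnj (cinner x y) = cinner y x"
  by (simp add: cinner_def mult.commute)

lemma cinner_add_right: "cinner x (y + z) = cinner x y + cinner x z"
  by (simp add: cinner_def distrib_left sum.distrib)

lemma cinner_add_left: "cinner (x + y) z = cinner x z + cinner y z"
  by (simp add: cinner_def distrib_right sum.distrib)

lemma cinner_diff_right: "cinner x (y - z) = cinner x y - cinner x z"
  by (simp add: cinner_def right_diff_distrib sum_subtractf)

lemma cinner_scale_right: "cinner x (c *s y) = c * cinner x y"
  by (simp add: cinner_def sum_distrib_left mult.assoc mult.left_commute)

lemma cinner_scale_left: "cinner (c *s x) y = cnj c * cinner x y"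
  by (simp add: cinner_def sum_distrib_left mult.assoc)

lemma cinner_sum_right: "cinner x (sum f S) = (\<Sum>k\<in>S. cinner x (f k))"
  unfolding cinner_def sum_component sum_distrib_left by (rule sum.swap)

lemma norm_vec_power2: "(norm (x::complex^'n::finite))^2 = (\<Sum>i\<in>UNIV. (cmod (x$i))^2)"
  by (simp add: norm_vec_def L2_set_def sum_nonneg)

lemma cinner_self: "cinner x x = complex_of_real ((norm x)^2)"
  unfolding norm_vec_power2 cinner_def of_real_sum
  by (rule sum.cong) (simp_all add: complex_norm_square[symmetric] mult.commute del: of_real_power)

lemma norm_vector_smult: "norm (c *s (x::complex^'n::finite)) = cmod c * norm x"
  by (simp add: norm_vec_def L2_set_def norm_mult power_mult_distrib sum_distrib_left[symmetric]
      real_sqrt_mult)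

lemma adj_adj [simp]: "adj (adj A) = A"
  by (simp add: adj_def vec_eq_iff)

lemma adj_mult: "adj (A ** B) = adj B ** adj A"
  by (simp add: adj_def matrix_matrix_mult_def vec_eq_iff mult.commute)

lemma hermitian_adj_eq: "hermitian A \<Longrightarrow> adj A = A"
  by (simp add: hermitian_def)

lemma hermitian_cnj_entry: "hermitian A \<Longrightarrow> cnj (A $ j $ i) = A $ i $ j"
  unfolding hermitian_def adj_def by (metis vec_lambda_beta)

lemma cinner_adj: "cinner x (A *v y) = cinner (adj A *v x) y"
  unfolding cinner_def adj_def matrix_vector_mult_def
  by (simp add: sum_distrib_left sum_distrib_right mult_ac cnj_sum) (rule sum.swap)

lemma hermitian_cinner: "hermitian A \<Longrightarrow> cinner x (A *v y) = cinner (A *v x) y"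
  by (metis cinner_adj hermitian_def)

lemma qform_cinner: "qform A x = cinner x (A *v x)"
  by (simp add: qform_def cinner_def matrix_vector_mult_def sum_distrib_left mult.assoc)

lemma qform_smult: "qform A (c *s x) = cnj c * c * qform A x"
  unfolding qform_cinner vector_scalar_commute cinner_scale_left cinner_scale_right
  by (simp add: mult_ac)

lemma hermitian_qform_real: "hermitian A \<Longrightarrow> qform A x = complex_of_real (Re (qform A x))"
proof -
  assume "hermitian A"
  then have "cnj (qform A x) = qform A x" by (metis cinner_cnj hermitian_cinner qform_cinner)
  then show ?thesis by (simp add: complex_eq_iff)
qed

lemma qform_congruence: "qform (adj S ** K ** S) x = qform K (S *v x)"
  by (simp add: qform_cinner matrix_vector_mul_assoc[symmetric] cinner_adj)

lemma norm_add_smult_power2: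
  "(norm (x + complex_of_real t *s r))^2 = (norm x)^2 + 2 * t * Re (cinner x r) + t^2 * (norm r)^2"
proof -
  have "cinner (x + complex_of_real t *s r) (x + complex_of_real t *s r) =
      cinner x x + complex_of_real t * (cinner x r + cnj (cinner x r)) + complex_of_real (t^2) * cinner r r"
    by (simp add: cinner_add_left cinner_add_right cinner_scale_left cinner_scale_right cinner_cnj
        algebra_simps power2_eq_square)
  from arg_cong[where f = Re, OF this] show ?thesis by (simp add: cinner_self complex_add_cnj)
qed

lemma hermitian_qform_add_smult:
  assumes "hermitian A"
  shows "Re (qform A (x + complex_of_real t *s r)) =
    Re (qform A x) + 2 * t * Re (cinner r (A *v x)) + t^2 * Re (qform A r)"
proof -
  have "qform A (x + complex_of_real t *s r) = qform A x
      + complex_of_real t * (cinner r (A *v x) + cnj (cinner r (A *v x))) + complex_of_real (t^2) * qform A r"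
    using hermitian_cinner[OF assms, of x r]
    by (simp add: qform_cinner matrix_vector_right_distrib vector_scalar_commute cinner_add_left
        cinner_add_right cinner_scale_left cinner_scale_right cinner_cnj algebra_simps power2_eq_square)
  then show ?thesis by (simp add: complex_add_cnj)
qed

lemma matrix_mult_diff_right: "(A::'a::comm_ring_1^'n^'m) ** (B - C) = A ** B - A ** C"
  by (simp add: vec_eq_iff matrix_matrix_mult_def sum_subtractf right_diff_distrib)

lemma matrix_mult_add_left: "((A::'a::comm_ring_1^'n^'m) + B) ** C = A ** C + B ** C"
  by (simp add: vec_eq_iff matrix_matrix_mult_def sum.distrib distrib_right)

lemma left_inverse_imp_mult_eq_0:
  assumes "B ** S = mat 1" and "S *v x = 0"
  shows "x = 0"
proof -
  have "x = (B ** S) *v x" using assms(1) by simp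
  also have "\<dots> = 0" by (simp add: matrix_vector_mul_assoc[symmetric] assms(2))
  finally show ?thesis .
qed


lemma rdiag_entry: "rdiag d $ i $ j = (if i = j then complex_of_real (d i) else 0)"
  by (simp add: rdiag_def)

lemma matrix_mult_rdiag_entry: "(M ** rdiag d) $ i $ j = M $ i $ j * complex_of_real (d j)"
  by (simp add: rdiag_def matrix_matrix_mult_def if_distrib if_distribR cong: if_cong)

lemma rdiag_matrix_mult_entry: "(rdiag d ** M) $ i $ j = complex_of_real (d i) * M $ i $ j"
  by (simp add: rdiag_def matrix_matrix_mult_def if_distrib if_distribR cong: if_cong)

lemma rdiag_mult: "rdiag a ** rdiag b = rdiag (\<lambda>i. a i * b i)"
  by (simp add: vec_eq_iff matrix_mult_rdiag_entry rdiag_entry)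

lemma adj_rdiag [simp]: "adj (rdiag d) = rdiag d"
  by (simp add: adj_def rdiag_def vec_eq_iff)

lemma rdiag_1: "rdiag (\<lambda>i. 1) = mat 1"
  by (simp add: rdiag_def mat_def vec_eq_iff)

lemma trace_rdiag: "trace (rdiag d) = (\<Sum>i\<in>UNIV. complex_of_real (d i))"
  by (simp add: trace_def rdiag_def)

lemma adj_mat_1 [simp]: "adj (mat 1) = mat 1"
  by (simp add: adj_def mat_def vec_eq_iff)

lemma unitaryD: "unitary U \<Longrightarrow> U ** adj U = mat 1" "unitary U \<Longrightarrow> adj U ** U = mat 1"
  by (auto simp: unitary_def)

lemma unitary_mat_1: "unitary (mat 1)"
  by (simp add: unitary_def)

lemma unitary_adj: "unitary U \<Longrightarrow> unitary (adj U)"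
  by (simp add: unitary_def)

lemma unitary_mult: "unitary U \<Longrightarrow> unitary V \<Longrightarrow> unitary (U ** V)"
  unfolding unitary_def adj_mult
  by (simp add: matrix_mul_assoc) (simp add: matrix_mul_assoc[symmetric])

lemma unitary_row_norm: "unitary W \<Longrightarrow> (\<Sum>j\<in>UNIV. (cmod (W$i$j))^2) = 1"
proof -
  assume "unitary W"
  then have "(W ** adj W) $ i $ i = 1" by (simp add: unitaryD mat_def)
  then have "complex_of_real (\<Sum>j\<in>UNIV. (cmod (W$i$j))^2) = 1"
    by (simp add: matrix_matrix_mult_def adj_def complex_norm_square[symmetric] del: of_real_power)
  then show ?thesis by (metis of_real_eq_1_iff)
qed

lemma unitary_column_norm: "unitary W \<Longrightarrow> (\<Sum>i\<in>UNIV. (cmod (W$i$j))^2) = 1"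
proof -
  assume "unitary W"
  then have "(adj W ** W) $ j $ j = 1" by (simp add: unitaryD mat_def)
  then have "complex_of_real (\<Sum>i\<in>UNIV. (cmod (W$i$j))^2) = 1"
    by (simp add: matrix_matrix_mult_def adj_def complex_norm_square[symmetric] mult.commute
        del: of_real_power)
  then show ?thesis by (metis of_real_eq_1_iff)
qed

section \<open>The spectral theorem for Hermitian matrices\<close>

lemma exists_nonzero_orthogonal:
  fixes vs :: "nat \<Rightarrow> complex^'n::finite"
  assumes k: "k < CARD('n)"
    and on: "\<And>i j. i < k \<Longrightarrow> j < k \<Longrightarrow> cinner (vs i) (vs j) = (if i = j then 1 else 0)"
  shows "\<exists>y. y \<noteq> 0 \<and> (\<forall>i<k. cinner (vs i) y = 0)"
proof -
  let ?S = "vs ` {..<k}"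
  have "vec.span ?S \<noteq> UNIV"
  proof
    assume "vec.span ?S = UNIV"
    then have "vec.dim (UNIV::(complex^'n) set) \<le> card ?S"
      by (intro vec.dim_le_card) auto
    also have "\<dots> \<le> k" using card_image_le[of "{..<k}" vs] by simp
    finally show False using k vec_dim_card[where 'a=complex and 'n='n] by linarith
  qed
  then obtain z where z: "z \<notin> vec.span ?S" by auto
  define y where "y = z - (\<Sum>i<k. cinner (vs i) z *s vs i)"
  have "y \<noteq> 0"
  proof
    assume "y = 0"
    then have "z = (\<Sum>i<k. cinner (vs i) z *s vs i)" by (simp add: y_def)
    also have "\<dots> \<in> vec.span ?S"
      by (intro vec.span_sum vec.span_scale vec.span_base) auto
    finally show False using z by simp
  qed
  moreover have "cinner (vs j) y = 0" if j: "j < k" for j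
  proof -
    have "cinner (vs j) y = cinner (vs j) z - (\<Sum>i<k. cinner (vs i) z * cinner (vs j) (vs i))"
      by (simp add: y_def cinner_diff_right cinner_sum_right cinner_scale_right)
    also have "(\<Sum>i<k. cinner (vs i) z * cinner (vs j) (vs i)) = (\<Sum>i<k. if i = j then cinner (vs i) z else 0)"
      by (rule sum.cong) (auto simp: on j)
    also have "\<dots> = cinner (vs j) z" using j by simp
    finally show ?thesis by simp
  qed
  ultimately show ?thesis by blast
qed

lemma linear_le_quadratic_imp_nonpos:
  fixes R C :: real
  assumes "\<And>t. 2 * t * R \<le> t^2 * C"
  shows "R \<le> 0"
proof (rule ccontr)
  assume "\<not> R \<le> 0"
  then have R: "R > 0" by simp
  show False
  proof (cases "C \<le> 0")
    case True
    with assms[of 1] R show False by simp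
  next
    case False
    from assms[of "R / C"] have "2 * (R / C) * R \<le> (R / C) * R"
      using False by (simp add: power2_eq_square)
    moreover have "(R / C) * R > 0" using False R by simp
    ultimately show False by simp
  qed
qed

text \<open>A maximiser of the Rayleigh quotient on an invariant subspace is an eigenvector:
  moving from x towards the residual r = A x - l x raises the quotient at first order by 2 |r|^2.\<close>

lemma hermitian_rayleigh_max_eigenvector:
  fixes A :: "'n::finite cmat"
  assumes herm: "hermitian A"
    and W_add: "\<And>u v. u \<in> W \<Longrightarrow> v \<in> W \<Longrightarrow> u + v \<in> W"
    and W_smult: "\<And>c u. u \<in> W \<Longrightarrow> c *s u \<in> W"
    and A_W: "\<And>u. u \<in> W \<Longrightarrow> A *v u \<in> W"
    and x: "x \<in> W" "cinner x x = 1"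
    and max: "\<And>u. u \<in> W \<Longrightarrow> Re (qform A u) \<le> Re (qform A x) * (norm u)^2"
  shows "A *v x = complex_of_real (Re (qform A x)) *s x"
proof -
  define l where "l = Re (qform A x)"
  have xAx: "cinner x (A *v x) = complex_of_real l"
    unfolding l_def qform_cinner[symmetric] by (rule hermitian_qform_real[OF herm])
  have norm_x: "(norm x)^2 = 1" using x(2) by (metis cinner_self of_real_eq_1_iff)
  define r where "r = A *v x - complex_of_real l *s x"
  have rW: "r \<in> W"
    using W_add[OF A_W[OF x(1)] W_smult[OF x(1), of "- complex_of_real l"]]
    by (simp add: r_def vector_smult_lneg)
  have xr: "cinner x r = 0"
    by (simp add: r_def cinner_diff_right cinner_scale_right x(2) xAx)
  define R where "R = (norm r)^2"
  have rAx: "Re (cinner r (A *v x)) = R"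
  proof -
    have "A *v x = r + complex_of_real l *s x" by (simp add: r_def)
    moreover have "cinner r x = 0" using xr cinner_cnj[of x r] by simp
    ultimately show ?thesis by (simp add: cinner_add_right cinner_scale_right cinner_self R_def)
  qed
  have "2 * t * R \<le> t^2 * (l * R - Re (qform A r))" for t :: real
  proof -
    have "x + complex_of_real t *s r \<in> W" using x(1) rW W_add W_smult by blast
    from max[OF this] show ?thesis
      by (simp add: hermitian_qform_add_smult[OF herm] norm_add_smult_power2 norm_x xr rAx
          flip: l_def R_def) (simp add: algebra_simps)
  qed
  then have "R \<le> 0" by (rule linear_le_quadratic_imp_nonpos)
  then have "r = 0" by (simp add: R_def)
  then show ?thesis by (simp add: r_def l_def)
qed

lemma hermitian_eigenvector_in_subspace:
  fixes A :: "'n::finite cmat"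
  assumes herm: "hermitian A"
    and W_add: "\<And>u v. u \<in> W \<Longrightarrow> v \<in> W \<Longrightarrow> u + v \<in> W"
    and W_smult: "\<And>c u. u \<in> W \<Longrightarrow> c *s u \<in> W"
    and W_closed: "closed W"
    and A_W: "\<And>u. u \<in> W \<Longrightarrow> A *v u \<in> W"
    and y: "y \<in> W" "y \<noteq> 0"
  shows "\<exists>x l. x \<in> W \<and> cinner x x = 1 \<and> A *v x = complex_of_real l *s x"
proof -
  define K where "K = sphere 0 1 \<inter> W"
  have "compact K" unfolding K_def using W_closed by (intro compact_Int_closed compact_sphere)
  have normalize: "complex_of_real (1 / norm u) *s u \<in> K" if "u \<in> W" "u \<noteq> 0" for u
    using that W_smult by (simp add: K_def norm_vector_smult norm_divide)
  have "continuous_on K (\<lambda>u. Re (qform A u))" unfolding qform_def by (intro continuous_intros)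
  moreover have "K \<noteq> {}" using normalize[OF y] by auto
  ultimately obtain x where xK: "x \<in> K" and x_max: "\<And>u. u \<in> K \<Longrightarrow> Re (qform A u) \<le> Re (qform A x)"
    using continuous_attains_sup[OF \<open>compact K\<close>] by blast
  have xW: "x \<in> W" and xx: "cinner x x = 1" using xK by (auto simp: K_def cinner_self)
  have "Re (qform A u) \<le> Re (qform A x) * (norm u)^2" if "u \<in> W" for u
  proof (cases "u = 0")
    case True
    then show ?thesis by (simp add: qform_def)
  next
    case False
    have "(1 / norm u)^2 * Re (qform A u) \<le> Re (qform A x)"
      using x_max[OF normalize[OF that False]] by (simp add: qform_smult power2_eq_square)
    then show ?thesis using False by (simp add: field_simps)
  qed
  from hermitian_rayleigh_max_eigenvector[OF herm W_add W_smult A_W xW xx this] xW xx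
  show ?thesis by blast
qed

lemma hermitian_orthonormal_eigenvectors:
  fixes A :: "'n::finite cmat"
  assumes herm: "hermitian A"
  shows "k \<le> CARD('n) \<Longrightarrow> \<exists>vs ds. (\<forall>i<k. A *v vs i = complex_of_real (ds i) *s vs i) \<and>
     (\<forall>i<k. \<forall>j<k. cinner (vs i) (vs j) = (if i = j then 1 else 0))"
proof (induction k)
  case 0
  show ?case by auto
next
  case (Suc k)
  then obtain vs ds where ev: "\<forall>i<k. A *v vs i = complex_of_real (ds i) *s vs i"
    and on: "\<forall>i<k. \<forall>j<k. cinner (vs i) (vs j) = (if i = j then 1 else 0)" by auto
  define W where "W = {y. \<forall>i<k. cinner (vs i) y = 0}"
  have "closed W"
  proof -
    have "W = (\<Inter>i<k. {y. cinner (vs i) y = 0})" by (auto simp: W_def)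
    moreover have "continuous_on UNIV (cinner (vs i))" for i
      unfolding cinner_def by (intro continuous_intros)
    ultimately show ?thesis by (auto intro!: closed_INT closed_Collect_eq continuous_on_const)
  qed
  moreover have "A *v u \<in> W" if "u \<in> W" for u
  proof -
    have "cinner (vs i) (A *v u) = 0" if "i < k" for i
      using hermitian_cinner[OF herm, of "vs i" u] ev \<open>u \<in> W\<close> that
      by (simp add: W_def cinner_scale_left)
    then show ?thesis by (simp add: W_def)
  qed
  moreover obtain y where "y \<noteq> 0" "y \<in> W"
    using exists_nonzero_orthogonal[of k vs] Suc.prems on by (auto simp: W_def)
  ultimately obtain x l where x: "x \<in> W" "cinner x x = 1" "A *v x = complex_of_real l *s x"
    using hermitian_eigenvector_in_subspace[OF herm, of W y]
    by (auto simp: W_def cinner_add_right cinner_scale_right)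
  have "cinner x (vs i) = 0" if "i < k" for i
    using x(1) that cinner_cnj[of "vs i" x] by (auto simp: W_def)
  then show ?case
    using ev on x by (intro exI[of _ "vs(k := x)"] exI[of _ "ds(k := l)"]) (auto simp: W_def less_Suc_eq)
qed

theorem hermitian_spectral:
  fixes A :: "'n::finite cmat"
  assumes herm: "hermitian A"
  shows "\<exists>U d. unitary U \<and> A = U ** rdiag d ** adj U"
proof -
  obtain vs ds where ev: "\<forall>i<CARD('n). A *v vs i = complex_of_real (ds i) *s vs i"
    and on: "\<forall>i<CARD('n). \<forall>j<CARD('n). cinner (vs i) (vs j) = (if i = j then 1 else 0)"
    using hermitian_orthonormal_eigenvectors[OF herm, of "CARD('n)"] by auto
  obtain g :: "'n \<Rightarrow> nat" where g: "bij_betw g UNIV {..<CARD('n)}"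
    using to_nat_on_finite[of "UNIV::'n set"] by auto
  have g_less: "g j < CARD('n)" for j using g by (auto simp: bij_betw_def)
  have g_eq_iff: "g i = g j \<longleftrightarrow> i = j" for i j using g by (auto simp: bij_betw_def inj_on_def)
  define U :: "'n cmat" where "U = (\<chi> i j. vs (g j) $ i)"
  define d where "d = ds \<circ> g"
  have "(adj U ** U) $ j $ l = cinner (vs (g j)) (vs (g l))" for j l
    by (simp add: U_def adj_def matrix_matrix_mult_def cinner_def)
  then have UU: "adj U ** U = mat 1" using on g_less g_eq_iff by (simp add: vec_eq_iff mat_def)
  then have UU': "U ** adj U = mat 1" using matrix_left_right_inverse by blast
  have "(A ** U) $ i $ l = (A *v vs (g l)) $ i" for i l
    by (simp add: U_def matrix_matrix_mult_def matrix_vector_mult_def)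
  then have AU: "A ** U = U ** rdiag d"
    using ev g_less by (simp add: vec_eq_iff matrix_mult_rdiag_entry d_def U_def mult.commute)
  have "A = A ** (U ** adj U)" using UU' by simp
  also have "\<dots> = U ** rdiag d ** adj U" by (simp add: matrix_mul_assoc AU)
  finally show ?thesis using UU UU' unfolding unitary_def by blast
qed


section \<open>The functional calculus\<close>

lemma hermitian_spectral_form: "hermitian (U ** rdiag d ** adj U)"
  by (simp add: hermitian_def adj_mult matrix_mul_assoc)

lemma spectral_form_mult:
  "unitary U \<Longrightarrow> (U ** rdiag a ** adj U) ** (U ** rdiag b ** adj U) = U ** rdiag (\<lambda>i. a i * b i) ** adj U"
  by (simp add: matrix_mul_assoc unitaryD) (simp add: matrix_mul_assoc[symmetric] rdiag_mult unitaryD)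

lemma spectral_form_eqI:
  assumes U: "unitary U" and V: "unitary V"
    and W: "(adj U ** V) ** rdiag q = rdiag p ** (adj U ** V)"
  shows "V ** rdiag q ** adj V = U ** rdiag p ** adj U"
proof -
  have "V ** rdiag q ** adj V = U ** ((adj U ** V) ** rdiag q) ** adj V"
    by (simp add: matrix_mul_assoc unitaryD[OF U])
  also have "\<dots> = U ** rdiag p ** (adj U ** (V ** adj V))" by (simp add: W matrix_mul_assoc)
  also have "\<dots> = U ** rdiag p ** adj U" by (simp add: unitaryD[OF V])
  finally show ?thesis .
qed

text \<open>An intertwiner only links equal eigenvalues, so it also intertwines their images under f.\<close>

lemma intertwines_rdiag_comp:
  assumes "W ** rdiag d = rdiag e ** W"
  shows "W ** rdiag (f \<circ> d) = rdiag (f \<circ> e) ** W"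
proof -
  have "W $ i $ j * complex_of_real (d j) = complex_of_real (e i) * W $ i $ j" for i j
    using assms by (simp add: vec_eq_iff matrix_mult_rdiag_entry rdiag_matrix_mult_entry)
  then have linked: "W $ i $ j = 0 \<or> d j = e i" for i j by (auto simp: mult.commute)
  have "W $ i $ j * complex_of_real (f (d j)) = complex_of_real (f (e i)) * W $ i $ j" for i j
    using linked[of i j] by (auto simp: mult.commute)
  then show ?thesis by (simp add: vec_eq_iff matrix_mult_rdiag_entry rdiag_matrix_mult_entry)
qed

lemma spectral_form_comp_unique:
  assumes U: "unitary U" and V: "unitary V" and eq: "U ** rdiag d ** adj U = V ** rdiag e ** adj V"
  shows "U ** rdiag (f \<circ> d) ** adj U = V ** rdiag (f \<circ> e) ** adj V"
proof -
  have "(adj V ** U) ** rdiag d = adj V ** (U ** rdiag d ** adj U) ** U"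
    by (simp add: matrix_mul_assoc[symmetric] unitaryD[OF U])
  also have "\<dots> = rdiag e ** (adj V ** U)"
    by (simp add: eq matrix_mul_assoc unitaryD[OF V])
  finally have "(adj V ** U) ** rdiag (f \<circ> d) = rdiag (f \<circ> e) ** (adj V ** U)"
    by (rule intertwines_rdiag_comp)
  from spectral_form_eqI[OF V U this] show ?thesis .
qed

lemma mfun_spectral:
  assumes U: "unitary U" and A: "A = U ** rdiag d ** adj U"
  shows "mfun f A = U ** rdiag (f \<circ> d) ** adj U"
proof -
  let ?P = "\<lambda>B. \<exists>U d. unitary U \<and> A = U ** rdiag d ** adj U \<and> B = U ** rdiag (f \<circ> d) ** adj U"
  have "?P (U ** rdiag (f \<circ> d) ** adj U)" using U A by blast
  then have "?P (mfun f A)" unfolding mfun_def by (rule someI)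
  then obtain V e where V: "unitary V" and A_V: "A = V ** rdiag e ** adj V"
    and f_A: "mfun f A = V ** rdiag (f \<circ> e) ** adj V"
    by blast
  have "V ** rdiag e ** adj V = U ** rdiag d ** adj U" using A A_V by simp
  from spectral_form_comp_unique[OF V U this] f_A show ?thesis by simp
qed

lemma mlog_spectral:
  "unitary U \<Longrightarrow> A = U ** rdiag d ** adj U \<Longrightarrow> mlog A = U ** rdiag (\<lambda>i. ln (d i)) ** adj U"
  unfolding mlog_def by (drule mfun_spectral[where f = ln]) (auto simp: o_def)

lemma mfun_mult:
  assumes "hermitian A"
  shows "mfun f A ** mfun g A = mfun (\<lambda>x. f x * g x) A"
proof -
  obtain U d where U: "unitary U" "A = U ** rdiag d ** adj U" using hermitian_spectral[OF assms] by blast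
  show ?thesis using spectral_form_mult[OF U(1)] by (simp add: mfun_spectral[OF U] o_def)
qed

lemma mfun_id:
  assumes "hermitian A"
  shows "mfun (\<lambda>x. x) A = A"
proof -
  obtain U d where U: "unitary U" "A = U ** rdiag d ** adj U" using hermitian_spectral[OF assms] by blast
  have "mfun (\<lambda>x. x) A = U ** rdiag d ** adj U" using mfun_spectral[OF U, of "\<lambda>x. x"] by (simp add: o_def)
  with U(2) show ?thesis by simp
qed

lemma mfun_const_1:
  assumes "hermitian A"
  shows "mfun (\<lambda>_. 1) A = mat 1"
proof -
  obtain U d where U: "unitary U" "A = U ** rdiag d ** adj U" using hermitian_spectral[OF assms] by blast
  show ?thesis by (simp add: mfun_spectral[OF U] o_def rdiag_1 unitaryD[OF U(1)])
qed

lemma hermitian_mfun: "hermitian A \<Longrightarrow> hermitian (mfun f A)"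
  by (metis hermitian_spectral_form mfun_spectral hermitian_spectral)

lemma trace_spectral_form:
  assumes "unitary U"
  shows "trace (U ** rdiag a ** adj U) = (\<Sum>i\<in>UNIV. complex_of_real (a i))"
proof -
  have "trace (U ** rdiag a ** adj U) = trace (U ** (rdiag a ** adj U))" by (simp add: matrix_mul_assoc)
  also have "\<dots> = trace ((rdiag a ** adj U) ** U)" by (rule trace_mul_sym)
  finally show ?thesis by (simp add: matrix_mul_assoc[symmetric] unitaryD[OF assms] trace_rdiag)
qed

lemma trace_spectral_form_mult:
  assumes U: "unitary U" and V: "unitary V"
  shows "trace ((U ** rdiag a ** adj U) ** (V ** rdiag b ** adj V)) =
    (\<Sum>i\<in>UNIV. \<Sum>j\<in>UNIV. complex_of_real (a i * b j * (cmod ((adj U ** V)$i$j))^2))"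
proof -
  define W where "W = adj U ** V"
  have "trace ((U ** rdiag a ** adj U) ** (V ** rdiag b ** adj V)) =
      trace (U ** (rdiag a ** adj U ** V ** rdiag b ** adj V))"
    by (simp add: matrix_mul_assoc)
  also have "\<dots> = trace ((rdiag a ** adj U ** V ** rdiag b ** adj V) ** U)" by (rule trace_mul_sym)
  also have "\<dots> = trace ((rdiag a ** W ** rdiag b) ** adj W)"
    by (simp add: W_def adj_mult matrix_mul_assoc)
  also have "\<dots> = (\<Sum>i\<in>UNIV. \<Sum>j\<in>UNIV. complex_of_real (a i) * W$i$j * complex_of_real (b j) * cnj (W$i$j))"
    by (simp add: trace_def matrix_matrix_mult_def[of "rdiag a ** W ** rdiag b"]
        matrix_mult_rdiag_entry rdiag_matrix_mult_entry adj_def)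
  also have "\<dots> = (\<Sum>i\<in>UNIV. \<Sum>j\<in>UNIV. complex_of_real (a i * b j * (cmod (W$i$j))^2))"
    by (intro sum.cong refl) (simp add: complex_norm_square[symmetric] mult_ac del: of_real_power)
  finally show ?thesis by (simp add: W_def)
qed


lemma pos_def_hermitian: "pos_def A \<Longrightarrow> hermitian A"
  by (simp add: pos_def_def)

lemma pos_def_iff: "pos_def A \<longleftrightarrow> hermitian A \<and> (\<forall>x. x \<noteq> 0 \<longrightarrow> Re (qform A x) > 0)"
  unfolding pos_def_def using hermitian_qform_real by (metis Im_complex_of_real)

lemma unitary_column_nonzero:
  assumes "unitary U"
  shows "column i U \<noteq> 0"
proof
  assume "column i U = 0"
  then have "(adj U ** U) $ i $ i = 0"
    by (simp add: matrix_matrix_mult_def column_def vec_eq_iff)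
  with assms show False by (simp add: unitaryD mat_def)
qed

lemma spectral_form_eigenvalue:
  assumes U: "unitary U" and A: "A = U ** rdiag d ** adj U"
  shows "d i = Re (qform A (column i U))"
proof -
  have "adj U ** A ** U = rdiag d"
    by (simp add: A matrix_mul_assoc unitaryD[OF U]) (simp add: matrix_mul_assoc[symmetric] unitaryD[OF U])
  then have "complex_of_real (d i) = (adj U ** A ** U) $ i $ i" by (simp add: rdiag_entry)
  also have "\<dots> = qform A (column i U)"
    by (simp add: adj_def matrix_matrix_mult_def sum_distrib_right qform_def column_def)
      (rule sum.swap)
  finally show ?thesis by (metis Re_complex_of_real)
qed

lemma pos_def_congruence:
  assumes K: "pos_def K" and S: "B ** S = mat 1"
  shows "pos_def (adj S ** K ** S)"
  unfolding pos_def_iff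
proof (intro conjI allI impI)
  show "hermitian (adj S ** K ** S)"
    using pos_def_hermitian[OF K] by (simp add: hermitian_def adj_mult matrix_mul_assoc)
  fix x :: "complex^'a" assume "x \<noteq> 0"
  then have "S *v x \<noteq> 0" using left_inverse_imp_mult_eq_0[OF S] by blast
  then show "Re (qform (adj S ** K ** S) x) > 0"
    using K by (simp add: qform_congruence pos_def_iff)
qed

lemma pos_def_spectral:
  assumes "pos_def A"
  shows "\<exists>U d. unitary U \<and> A = U ** rdiag d ** adj U \<and> (\<forall>i. d i > 0)"
proof -
  obtain U d where U: "unitary U" "A = U ** rdiag d ** adj U"
    using hermitian_spectral[OF pos_def_hermitian[OF assms]] by blast
  have "d i > 0" for i
    using assms unitary_column_nonzero[OF U(1)] by (simp add: spectral_form_eigenvalue[OF U] pos_def_iff)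
  then show ?thesis using U by blast
qed

lemma qform_rdiag: "qform (rdiag d) y = complex_of_real (\<Sum>i\<in>UNIV. d i * (cmod (y$i))^2)"
proof -
  have "qform (rdiag d) y = (\<Sum>i\<in>UNIV. cnj (y$i) * complex_of_real (d i) * y$i)"
    by (simp add: qform_def rdiag_def if_distrib if_distribR cong: if_cong)
  also have "\<dots> = (\<Sum>i\<in>UNIV. complex_of_real (d i * (cmod (y$i))^2))"
    by (intro sum.cong refl) (simp add: complex_norm_square[symmetric] mult_ac del: of_real_power)
  finally show ?thesis by simp
qed

lemma pos_def_spectral_form:
  assumes U: "unitary U" and d: "\<And>i. d i > 0"
  shows "pos_def (U ** rdiag d ** adj U)"
proof -
  have "pos_def (rdiag d)"
    unfolding pos_def_iff
  proof (intro conjI allI impI)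
    show "hermitian (rdiag d)" by (simp add: hermitian_def)
    fix y :: "complex^'a" assume "y \<noteq> 0"
    then obtain i where i: "y$i \<noteq> 0" by (auto simp: vec_eq_iff)
    have "0 < d i * (cmod (y$i))^2" using d[of i] i by simp
    also have "\<dots> \<le> (\<Sum>i\<in>UNIV. d i * (cmod (y$i))^2)"
      by (rule member_le_sum) (auto intro: mult_nonneg_nonneg less_imp_le[OF d])
    also have "\<dots> = Re (qform (rdiag d) y)"
      by (simp add: qform_rdiag)
    finally show "Re (qform (rdiag d) y) > 0" .
  qed
  from pos_def_congruence[OF this unitaryD(1)[OF U]] show ?thesis by simp
qed

lemma pos_def_mat_1: "pos_def (mat 1)"
  using pos_def_spectral_form[OF unitary_mat_1, of "\<lambda>_. 1"] by (simp add: rdiag_1)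

lemma full_rank_state_spectral:
  assumes "full_rank_state A"
  shows "\<exists>U d. unitary U \<and> A = U ** rdiag d ** adj U \<and> (\<forall>i. d i > 0) \<and> (\<Sum>i\<in>UNIV. d i) = 1"
proof -
  have "pos_def A" using assms by (simp add: full_rank_state_def)
  then obtain U d where U: "unitary U" "A = U ** rdiag d ** adj U" "\<forall>i. d i > 0"
    using pos_def_spectral by blast
  have "complex_of_real (\<Sum>i\<in>UNIV. d i) = 1"
    using assms trace_spectral_form[OF U(1)] U(2) by (simp add: full_rank_state_def)
  then show ?thesis using U by (metis of_real_eq_1_iff)
qed

lemma mfun_cong_pos_def:
  assumes A: "pos_def A" and fg: "\<And>x. x > 0 \<Longrightarrow> f x = g x"
  shows "mfun f A = mfun g A"
proof -
  obtain U a where U: "unitary U" "A = U ** rdiag a ** adj U" "\<forall>i. a i > 0"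
    using pos_def_spectral[OF A] by blast
  have "f \<circ> a = g \<circ> a" using U(3) fg by auto
  then show ?thesis using mfun_spectral[OF U(1,2)] by metis
qed

lemma msqrt_mult_self:
  assumes A: "pos_def A"
  shows "msqrt A ** msqrt A = A"
proof -
  have "msqrt A ** msqrt A = mfun (\<lambda>x. sqrt x * sqrt x) A"
    by (simp add: msqrt_def mfun_mult pos_def_hermitian[OF A])
  also have "\<dots> = mfun (\<lambda>x. x) A" by (rule mfun_cong_pos_def[OF A]) simp
  finally show ?thesis by (simp add: mfun_id pos_def_hermitian[OF A])
qed

lemma minvsqrt_mult_msqrt:
  assumes A: "pos_def A"
  shows "minvsqrt A ** msqrt A = mat 1"
proof -
  have "minvsqrt A ** msqrt A = mfun (\<lambda>x. 1 / sqrt x * sqrt x) A"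
    by (simp add: msqrt_def minvsqrt_def mfun_mult pos_def_hermitian[OF A])
  also have "\<dots> = mfun (\<lambda>_. 1) A" by (rule mfun_cong_pos_def[OF A]) simp
  finally show ?thesis by (simp add: mfun_const_1 pos_def_hermitian[OF A])
qed

lemma msqrt_mult_minvsqrt:
  assumes A: "pos_def A"
  shows "msqrt A ** minvsqrt A = mat 1"
proof -
  have "msqrt A ** minvsqrt A = mfun (\<lambda>x. sqrt x * (1 / sqrt x)) A"
    by (simp add: msqrt_def minvsqrt_def mfun_mult pos_def_hermitian[OF A])
  also have "\<dots> = mfun (\<lambda>_. 1) A" by (rule mfun_cong_pos_def[OF A]) simp
  finally show ?thesis by (simp add: mfun_const_1 pos_def_hermitian[OF A])
qed

lemma minvsqrt_sandwich:
  assumes A: "pos_def A"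
  shows "minvsqrt A ** A ** minvsqrt A = mat 1"
proof -
  have "minvsqrt A ** A ** minvsqrt A =
      mfun (\<lambda>x. 1 / sqrt x) A ** mfun (\<lambda>x. x) A ** mfun (\<lambda>x. 1 / sqrt x) A"
    by (simp add: minvsqrt_def mfun_id pos_def_hermitian[OF A])
  also have "\<dots> = mfun (\<lambda>x. 1 / sqrt x * x * (1 / sqrt x)) A"
    by (simp add: mfun_mult pos_def_hermitian[OF A])
  also have "\<dots> = mfun (\<lambda>_. 1) A" by (rule mfun_cong_pos_def[OF A]) (simp add: field_simps)
  finally show ?thesis by (simp add: mfun_const_1 pos_def_hermitian[OF A])
qed


section \<open>Klein's inequality\<close>

lemma doubly_stochastic_sum_diff:
  fixes p q :: "'n::finite \<Rightarrow> real" and w :: "'n \<Rightarrow> 'n \<Rightarrow> real"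
  assumes row: "\<And>i. (\<Sum>j\<in>UNIV. w i j) = 1" and col: "\<And>j. (\<Sum>i\<in>UNIV. w i j) = 1"
    and "(\<Sum>i\<in>UNIV. p i) = (\<Sum>j\<in>UNIV. q j)"
  shows "(\<Sum>i\<in>UNIV. \<Sum>j\<in>UNIV. w i j * (p i - q j)) = 0"
proof -
  have "(\<Sum>i\<in>UNIV. \<Sum>j\<in>UNIV. w i j * (p i - q j)) =
      (\<Sum>i\<in>UNIV. \<Sum>j\<in>UNIV. w i j * p i) - (\<Sum>i\<in>UNIV. \<Sum>j\<in>UNIV. w i j * q j)"
    by (simp add: right_diff_distrib sum_subtractf)
  also have "(\<Sum>i\<in>UNIV. \<Sum>j\<in>UNIV. w i j * q j) = (\<Sum>j\<in>UNIV. \<Sum>i\<in>UNIV. w i j * q j)"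
    by (rule sum.swap)
  also have "(\<Sum>i\<in>UNIV. \<Sum>j\<in>UNIV. w i j * p i) - \<dots> = 0"
    using assms(3) by (simp add: sum_distrib_right[symmetric] row col)
  finally show ?thesis .
qed

lemma klein_weighted:
  fixes p q :: "'n::finite \<Rightarrow> real" and w :: "'n \<Rightarrow> 'n \<Rightarrow> real"
  assumes p: "\<And>i. p i > 0" and q: "\<And>j. q j > 0" and w: "\<And>i j. w i j \<ge> 0"
    and row: "\<And>i. (\<Sum>j\<in>UNIV. w i j) = 1" and col: "\<And>j. (\<Sum>i\<in>UNIV. w i j) = 1"
    and sum_p: "(\<Sum>i\<in>UNIV. p i) = 1" and sum_q: "(\<Sum>j\<in>UNIV. q j) = 1"
  shows "(\<Sum>i\<in>UNIV. \<Sum>j\<in>UNIV. w i j * (p i * ln (p i) - p i * ln (q j))) \<ge> 0"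
    and "(\<Sum>i\<in>UNIV. \<Sum>j\<in>UNIV. w i j * (p i * ln (p i) - p i * ln (q j))) = 0
          \<longleftrightarrow> (\<forall>i j. w i j \<noteq> 0 \<longrightarrow> p i = q j)"
proof -
  define T where "T i j = w i j * (p i * ln (p i) - p i * ln (q j))" for i j
  define L where "L i j = w i j * (p i - q j)" for i j
  have scalar: "p i * ln (p i) - p i * ln (q j) \<ge> p i - q j" for i j
    using ln_diff_le[OF q p, of j i] p[of i] by (simp add: field_simps)
  have scalar_strict: "p i * ln (p i) - p i * ln (q j) > p i - q j" if "p i \<noteq> q j" for i j
    using ln_diff_less[OF q p, of j i] p[of i] that by (simp add: field_simps)
  have TL: "T i j \<ge> L i j" for i j
    unfolding T_def L_def using scalar w by (simp add: mult_left_mono)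
  have sum_L: "(\<Sum>i\<in>UNIV. \<Sum>j\<in>UNIV. L i j) = 0"
    unfolding L_def using sum_p sum_q by (intro doubly_stochastic_sum_diff row col) simp
  show "(\<Sum>i\<in>UNIV. \<Sum>j\<in>UNIV. w i j * (p i * ln (p i) - p i * ln (q j))) \<ge> 0"
  proof -
    have "(\<Sum>i\<in>UNIV. \<Sum>j\<in>UNIV. L i j) \<le> (\<Sum>i\<in>UNIV. \<Sum>j\<in>UNIV. T i j)" by (intro sum_mono TL)
    then show ?thesis using sum_L by (simp add: T_def)
  qed
  show "(\<Sum>i\<in>UNIV. \<Sum>j\<in>UNIV. w i j * (p i * ln (p i) - p i * ln (q j))) = 0
          \<longleftrightarrow> (\<forall>i j. w i j \<noteq> 0 \<longrightarrow> p i = q j)"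
  proof
    assume eq: "(\<Sum>i\<in>UNIV. \<Sum>j\<in>UNIV. w i j * (p i * ln (p i) - p i * ln (q j))) = 0"
    show "\<forall>i j. w i j \<noteq> 0 \<longrightarrow> p i = q j"
    proof (intro allI impI, rule ccontr)
      fix i j assume "w i j \<noteq> 0" "p i \<noteq> q j"
      then have "T i j > L i j" unfolding T_def L_def
        using scalar_strict w[of i j] by (simp add: mult_strict_left_mono)
      then have "(\<Sum>j'\<in>UNIV. T i j') > (\<Sum>j'\<in>UNIV. L i j')"
        by (intro sum_strict_mono_ex1) (auto intro: TL)
      then have "(\<Sum>i\<in>UNIV. \<Sum>j\<in>UNIV. T i j) > (\<Sum>i\<in>UNIV. \<Sum>j\<in>UNIV. L i j)"
        by (intro sum_strict_mono_ex1) (auto intro: sum_mono TL)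
      then show False using eq sum_L by (simp add: T_def)
    qed
  next
    assume "\<forall>i j. w i j \<noteq> 0 \<longrightarrow> p i = q j"
    then have "T i j = L i j" for i j by (cases "w i j = 0") (auto simp: T_def L_def)
    then show "(\<Sum>i\<in>UNIV. \<Sum>j\<in>UNIV. w i j * (p i * ln (p i) - p i * ln (q j))) = 0"
      using sum_L by (simp add: T_def[symmetric])
  qed
qed

lemma rel_ent_spectral:
  assumes U: "unitary U" "\<rho> = U ** rdiag p ** adj U"
    and V: "unitary V" "\<sigma> = V ** rdiag q ** adj V"
  shows "rel_ent \<rho> \<sigma> =
    (\<Sum>i\<in>UNIV. \<Sum>j\<in>UNIV. (cmod ((adj U ** V)$i$j))^2 * (p i * ln (p i) - p i * ln (q j)))"
proof -
  define w where "w i j = (cmod ((adj U ** V)$i$j))^2" for i j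
  have row: "(\<Sum>j\<in>UNIV. w i j) = 1" for i
    unfolding w_def by (intro unitary_row_norm unitary_mult unitary_adj U V)
  have "trace (\<rho> ** mlog \<rho>) = trace (U ** rdiag (\<lambda>i. p i * ln (p i)) ** adj U)"
    unfolding mlog_spectral[OF U] by (simp only: U(2) spectral_form_mult[OF U(1)])
  also have "\<dots> = (\<Sum>i\<in>UNIV. complex_of_real (p i * ln (p i)))"
    by (rule trace_spectral_form[OF U(1)])
  also have "\<dots> = (\<Sum>i\<in>UNIV. \<Sum>j\<in>UNIV. complex_of_real (w i j * (p i * ln (p i))))"
    by (simp add: row flip: of_real_sum sum_distrib_right)
  finally have log_\<rho>: "trace (\<rho> ** mlog \<rho>) = \<dots>" .
  have log_\<sigma>: "trace (\<rho> ** mlog \<sigma>) = (\<Sum>i\<in>UNIV. \<Sum>j\<in>UNIV. complex_of_real (w i j * (p i * ln (q j))))"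
    unfolding mlog_spectral[OF V] U(2) trace_spectral_form_mult[OF U(1) V(1)] w_def
    by (simp add: mult_ac)
  show ?thesis
    by (simp add: rel_ent_def matrix_mult_diff_right trace_sub log_\<rho> log_\<sigma> Re_sum
        sum_subtractf[symmetric] right_diff_distrib flip: w_def)
qed

theorem klein_inequality:
  assumes \<rho>: "full_rank_state \<rho>" and \<sigma>: "full_rank_state \<sigma>"
  shows "rel_ent \<rho> \<sigma> \<ge> 0" and "rel_ent \<rho> \<sigma> = 0 \<longleftrightarrow> \<rho> = \<sigma>"
proof -
  obtain U p where U: "unitary U" "\<rho> = U ** rdiag p ** adj U" "\<forall>i. p i > 0" "(\<Sum>i\<in>UNIV. p i) = 1"
    using full_rank_state_spectral[OF \<rho>] by blast
  obtain V q where V: "unitary V" "\<sigma> = V ** rdiag q ** adj V" "\<forall>i. q i > 0" "(\<Sum>i\<in>UNIV. q i) = 1"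
    using full_rank_state_spectral[OF \<sigma>] by blast
  define W where "W = adj U ** V"
  have "unitary W" unfolding W_def by (intro unitary_mult unitary_adj U V)
  note klein = klein_weighted[of p q "\<lambda>i j. (cmod (W$i$j))^2", OF _ _ _
      unitary_row_norm[OF \<open>unitary W\<close>] unitary_column_norm[OF \<open>unitary W\<close>] U(4) V(4)]
  note rel_ent = rel_ent_spectral[OF U(1,2) V(1,2), folded W_def]
  show "rel_ent \<rho> \<sigma> \<ge> 0" using klein(1) U(3) V(3) by (simp add: rel_ent)
  show "rel_ent \<rho> \<sigma> = 0 \<longleftrightarrow> \<rho> = \<sigma>"
  proof
    assume "rel_ent \<rho> \<sigma> = 0"
    then have linked: "\<forall>i j. W $ i $ j \<noteq> 0 \<longrightarrow> p i = q j"
      using klein(2) U(3) V(3) by (simp add: rel_ent)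
    have "W $ i $ j * complex_of_real (q j) = complex_of_real (p i) * W $ i $ j" for i j
      using linked by (cases "W $ i $ j = 0") (auto simp: mult.commute)
    then have "W ** rdiag q = rdiag p ** W"
      by (simp add: vec_eq_iff matrix_mult_rdiag_entry rdiag_matrix_mult_entry)
    from spectral_form_eqI[OF U(1) V(1) this[unfolded W_def]] show "\<rho> = \<sigma>" using U(2) V(2) by simp
  qed (simp add: rel_ent_def trace_def)
qed



section \<open>Tensor products and partial traces\<close>

lemma sum_UNIV_prod: "(\<Sum>r\<in>(UNIV::('a::finite \<times> 'b::finite) set). f r) = (\<Sum>a\<in>UNIV. \<Sum>b\<in>UNIV. f (a, b))"
  by (metis UNIV_Times_UNIV sum.cartesian_product case_prod_eta)

lemma kron_entry: "kron A B $ (a, b) $ (c, d) = A$a$c * B$b$d"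
  by (simp add: kron_def)

lemma kron_mult: "kron A B ** kron C D = kron (A ** C) (B ** D)"
  by (simp add: vec_eq_iff matrix_matrix_mult_def kron_def sum_UNIV_prod sum_product mult_ac)

lemma adj_kron: "adj (kron A B) = kron (adj A) (adj B)"
  by (simp add: vec_eq_iff adj_def kron_def)

lemma kron_rdiag: "kron (rdiag a) (rdiag b) = rdiag (\<lambda>p. a (fst p) * b (snd p))"
  by (auto simp: vec_eq_iff kron_def rdiag_def prod_eq_iff)

lemma kron_mat_1: "kron (mat 1 :: 'a::finite cmat) (mat 1 :: 'b::finite cmat) = mat 1"
  by (auto simp: vec_eq_iff kron_def mat_def prod_eq_iff)

lemma unitary_kron: "unitary U \<Longrightarrow> unitary V \<Longrightarrow> unitary (kron U V)"
  by (simp add: unitary_def adj_kron kron_mult kron_mat_1)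

lemma kron_spectral_form:
  "kron (U ** rdiag a ** adj U) (V ** rdiag b ** adj V) =
   kron U V ** rdiag (\<lambda>p. a (fst p) * b (snd p)) ** adj (kron U V)"
  by (simp only: kron_rdiag[symmetric] adj_kron kron_mult)

lemma trace_kron: "trace (kron A B) = trace A * trace B"
  by (simp add: trace_def sum_UNIV_prod kron_entry sum_product)

lemma ptrA_kron: "trace A = 1 \<Longrightarrow> ptrA (kron A B) = B"
  by (simp add: vec_eq_iff ptrA_def kron_def trace_def flip: sum_distrib_right)

lemma ptrB_kron: "trace B = 1 \<Longrightarrow> ptrB (kron A B) = A"
  by (simp add: vec_eq_iff ptrB_def kron_def trace_def flip: sum_distrib_left)

lemma trace_ptrA: "trace (ptrA \<rho>) = trace \<rho>"
  by (simp add: trace_def ptrA_def sum_UNIV_prod) (rule sum.swap)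

lemma trace_ptrB: "trace (ptrB \<rho>) = trace \<rho>"
  by (simp add: trace_def ptrB_def sum_UNIV_prod)

lemma trace_kron_mat_1_right: "trace (kron X (mat 1) ** \<rho>) = trace (X ** ptrB \<rho>)"
proof -
  have "trace (kron X (mat 1) ** \<rho>) = (\<Sum>a\<in>UNIV. \<Sum>b\<in>UNIV. \<Sum>c\<in>UNIV. X$a$c * \<rho> $ (c,b) $ (a,b))"
    by (simp add: trace_def matrix_matrix_mult_def sum_UNIV_prod kron_entry mat_def
        if_distrib if_distribR cong: if_cong)
  also have "\<dots> = (\<Sum>a\<in>UNIV. \<Sum>c\<in>UNIV. \<Sum>b\<in>UNIV. X$a$c * \<rho> $ (c,b) $ (a,b))"
    by (rule sum.cong[OF refl], rule sum.swap)
  also have "\<dots> = trace (X ** ptrB \<rho>)"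
    by (simp add: trace_def matrix_matrix_mult_def ptrB_def sum_distrib_left)
  finally show ?thesis .
qed

lemma trace_kron_mat_1_left: "trace (kron (mat 1) Y ** \<rho>) = trace (Y ** ptrA \<rho>)"
proof -
  have "trace (kron (mat 1) Y ** \<rho>) = (\<Sum>a\<in>UNIV. \<Sum>b\<in>UNIV. \<Sum>c\<in>UNIV. \<Sum>d\<in>UNIV.
        (if a = c then 1 else 0) * Y$b$d * \<rho> $ (c,d) $ (a,b))"
    by (simp add: trace_def matrix_matrix_mult_def sum_UNIV_prod kron_entry mat_def)
  also have "\<dots> = (\<Sum>a\<in>UNIV. \<Sum>b\<in>UNIV. \<Sum>d\<in>UNIV. \<Sum>c\<in>UNIV.
        (if a = c then 1 else 0) * Y$b$d * \<rho> $ (c,d) $ (a,b))"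
    by (rule sum.cong[OF refl], rule sum.cong[OF refl], rule sum.swap)
  also have "\<dots> = (\<Sum>a\<in>UNIV. \<Sum>b\<in>UNIV. \<Sum>d\<in>UNIV. Y$b$d * \<rho> $ (a,d) $ (a,b))"
    by (simp add: if_distrib if_distribR sum.delta cong: if_cong)
  also have "\<dots> = (\<Sum>b\<in>UNIV. \<Sum>d\<in>UNIV. \<Sum>a\<in>UNIV. Y$b$d * \<rho> $ (a,d) $ (a,b))"
    by (subst sum.swap) (rule sum.cong[OF refl], rule sum.swap)
  also have "\<dots> = trace (Y ** ptrA \<rho>)"
    by (simp add: trace_def matrix_matrix_mult_def ptrA_def sum_distrib_left)
  finally show ?thesis .
qed

lemma hermitian_ptrA: "hermitian \<rho> \<Longrightarrow> hermitian (ptrA \<rho>)"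
  unfolding hermitian_def[of "ptrA \<rho>"] by (simp add: vec_eq_iff adj_def ptrA_def hermitian_cnj_entry)

lemma hermitian_ptrB: "hermitian \<rho> \<Longrightarrow> hermitian (ptrB \<rho>)"
  unfolding hermitian_def[of "ptrB \<rho>"] by (simp add: vec_eq_iff adj_def ptrB_def hermitian_cnj_entry)

lemma if_zero_mult: "(if P then x else 0) * y = (if P then x * y else (0::'a::mult_zero))"
  by simp

lemma mult_if_zero: "x * (if P then y else 0) = (if P then x * y else (0::'a::mult_zero))"
  by simp

lemma sum_if_zero: "(\<Sum>x\<in>A. if P then f x else 0) = (if P then sum f A else 0)"
  by simp

lemmas collapse_if_zero = vec_lambda_beta fst_conv snd_conv if_distrib[of cnj] complex_cnj_zero
  if_zero_mult mult_if_zero sum_if_zero sum.delta sum.delta' finite UNIV_I if_True mult.assoc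

lemma qform_ptrA: "qform (ptrA \<rho>) z = (\<Sum>i\<in>UNIV. qform \<rho> (\<chi> p. if fst p = i then z $ snd p else 0))"
proof -
  have "qform (ptrA \<rho>) z = (\<Sum>j\<in>UNIV. \<Sum>l\<in>UNIV. \<Sum>i\<in>UNIV. cnj (z$j) * \<rho> $ (i,j) $ (i,l) * z$l)"
    by (simp add: qform_def ptrA_def sum_distrib_left sum_distrib_right)
  also have "\<dots> = (\<Sum>j\<in>UNIV. \<Sum>i\<in>UNIV. \<Sum>l\<in>UNIV. cnj (z$j) * \<rho> $ (i,j) $ (i,l) * z$l)"
    by (rule sum.cong[OF refl], rule sum.swap)
  also have "\<dots> = (\<Sum>i\<in>UNIV. \<Sum>j\<in>UNIV. \<Sum>l\<in>UNIV. cnj (z$j) * \<rho> $ (i,j) $ (i,l) * z$l)"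
    by (rule sum.swap)
  also have "\<dots> = (\<Sum>i\<in>UNIV. qform \<rho> (\<chi> p. if fst p = i then z $ snd p else 0))"
    unfolding qform_def sum_UNIV_prod by (simp only: collapse_if_zero)
  finally show ?thesis .
qed

lemma qform_ptrB: "qform (ptrB \<rho>) z = (\<Sum>j\<in>UNIV. qform \<rho> (\<chi> p. if snd p = j then z $ fst p else 0))"
proof -
  have "qform (ptrB \<rho>) z = (\<Sum>i\<in>UNIV. \<Sum>k\<in>UNIV. \<Sum>j\<in>UNIV. cnj (z$i) * \<rho> $ (i,j) $ (k,j) * z$k)"
    by (simp add: qform_def ptrB_def sum_distrib_left sum_distrib_right)
  also have "\<dots> = (\<Sum>i\<in>UNIV. \<Sum>j\<in>UNIV. \<Sum>k\<in>UNIV. cnj (z$i) * \<rho> $ (i,j) $ (k,j) * z$k)"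
    by (rule sum.cong[OF refl], rule sum.swap)
  also have "\<dots> = (\<Sum>j\<in>UNIV. \<Sum>i\<in>UNIV. \<Sum>k\<in>UNIV. cnj (z$i) * \<rho> $ (i,j) $ (k,j) * z$k)"
    by (rule sum.swap)
  also have "\<dots> = (\<Sum>j\<in>UNIV. qform \<rho> (\<chi> p. if snd p = j then z $ fst p else 0))"
    unfolding qform_def sum_UNIV_prod by (simp only: collapse_if_zero)
  finally show ?thesis .
qed

lemma sum_Re_pos:
  fixes f :: "'i::finite \<Rightarrow> complex"
  assumes "\<And>i. Re (f i) > 0"
  shows "Re (sum f UNIV) > 0"
proof -
  obtain i0 :: 'i where True by blast
  have "0 < Re (f i0)" by (rule assms)
  also have "\<dots> \<le> (\<Sum>i\<in>UNIV. Re (f i))" by (rule member_le_sum) (auto intro: less_imp_le assms)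
  finally show ?thesis by (simp add: Re_sum)
qed

lemma pos_def_ptrA: "pos_def \<rho> \<Longrightarrow> pos_def (ptrA \<rho>)"
  unfolding pos_def_iff
proof (intro conjI allI impI)
  assume \<rho>: "hermitian \<rho> \<and> (\<forall>x. x \<noteq> 0 \<longrightarrow> 0 < Re (qform \<rho> x))"
  then show "hermitian (ptrA \<rho>)" by (simp add: hermitian_ptrA)
  fix z :: "complex^'b" assume "z \<noteq> 0"
  then obtain b where "z $ b \<noteq> 0" by (auto simp: vec_eq_iff)
  then have "(\<chi> p. if fst p = i then z $ snd p else 0) $ (i, b) \<noteq> 0" for i :: 'a by simp
  then have "(\<chi> p. if fst p = i then z $ snd p else 0) \<noteq> 0" for i :: 'a by (metis zero_index)
  then have "Re (qform \<rho> (\<chi> p. if fst p = i then z $ snd p else 0)) > 0" for i :: 'a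
    using \<rho> by blast
  then show "Re (qform (ptrA \<rho>) z) > 0" unfolding qform_ptrA by (rule sum_Re_pos)
qed

lemma pos_def_ptrB: "pos_def \<rho> \<Longrightarrow> pos_def (ptrB \<rho>)"
  unfolding pos_def_iff
proof (intro conjI allI impI)
  assume \<rho>: "hermitian \<rho> \<and> (\<forall>x. x \<noteq> 0 \<longrightarrow> 0 < Re (qform \<rho> x))"
  then show "hermitian (ptrB \<rho>)" by (simp add: hermitian_ptrB)
  fix z :: "complex^'a" assume "z \<noteq> 0"
  then obtain a where "z $ a \<noteq> 0" by (auto simp: vec_eq_iff)
  then have "(\<chi> p. if snd p = j then z $ fst p else 0) $ (a, j) \<noteq> 0" for j :: 'b by simp
  then have "(\<chi> p. if snd p = j then z $ fst p else 0) \<noteq> 0" for j :: 'b by (metis zero_index)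
  then have "Re (qform \<rho> (\<chi> p. if snd p = j then z $ fst p else 0)) > 0" for j :: 'b
    using \<rho> by blast
  then show "Re (qform (ptrB \<rho>) z) > 0" unfolding qform_ptrB by (rule sum_Re_pos)
qed

lemma pos_def_kron:
  assumes A: "pos_def A" and B: "pos_def B"
  shows "pos_def (kron A B)"
proof -
  obtain U a where U: "unitary U" "A = U ** rdiag a ** adj U" "\<forall>i. a i > 0"
    using pos_def_spectral[OF A] by blast
  obtain V b where V: "unitary V" "B = V ** rdiag b ** adj V" "\<forall>i. b i > 0"
    using pos_def_spectral[OF B] by blast
  have "kron A B = kron U V ** rdiag (\<lambda>p. a (fst p) * b (snd p)) ** adj (kron U V)"
    unfolding U(2) V(2) by (rule kron_spectral_form)
  moreover have "pos_def (kron U V ** rdiag (\<lambda>p. a (fst p) * b (snd p)) ** adj (kron U V))"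
    using U(3) V(3) by (intro pos_def_spectral_form unitary_kron U(1) V(1)) simp
  ultimately show ?thesis by simp
qed

lemma full_rank_state_ptrA: "full_rank_state \<rho> \<Longrightarrow> full_rank_state (ptrA \<rho>)"
  by (simp add: full_rank_state_def pos_def_ptrA trace_ptrA)

lemma full_rank_state_ptrB: "full_rank_state \<rho> \<Longrightarrow> full_rank_state (ptrB \<rho>)"
  by (simp add: full_rank_state_def pos_def_ptrB trace_ptrB)

lemma full_rank_state_kron: "full_rank_state A \<Longrightarrow> full_rank_state B \<Longrightarrow> full_rank_state (kron A B)"
  by (simp add: full_rank_state_def pos_def_kron trace_kron)

lemma mfun_kron:
  assumes A: "pos_def A" and B: "pos_def B"
    and fgh: "\<And>x y. x > 0 \<Longrightarrow> y > 0 \<Longrightarrow> f (x * y) = g x * h y"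
  shows "mfun f (kron A B) = kron (mfun g A) (mfun h B)"
proof -
  obtain U a where U: "unitary U" "A = U ** rdiag a ** adj U" "\<forall>i. a i > 0"
    using pos_def_spectral[OF A] by blast
  obtain V b where V: "unitary V" "B = V ** rdiag b ** adj V" "\<forall>i. b i > 0"
    using pos_def_spectral[OF B] by blast
  have "kron A B = kron U V ** rdiag (\<lambda>p. a (fst p) * b (snd p)) ** adj (kron U V)"
    unfolding U(2) V(2) by (rule kron_spectral_form)
  then have "mfun f (kron A B) = kron U V ** rdiag (f \<circ> (\<lambda>p. a (fst p) * b (snd p))) ** adj (kron U V)"
    by (rule mfun_spectral[OF unitary_kron[OF U(1) V(1)]])
  also have "f \<circ> (\<lambda>p. a (fst p) * b (snd p)) = (\<lambda>p. (g \<circ> a) (fst p) * (h \<circ> b) (snd p))"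
    using U(3) V(3) fgh by auto
  finally show ?thesis
    by (simp add: mfun_spectral[OF U(1,2)] mfun_spectral[OF V(1,2)] kron_spectral_form)
qed

lemma msqrt_kron: "pos_def A \<Longrightarrow> pos_def B \<Longrightarrow> msqrt (kron A B) = kron (msqrt A) (msqrt B)"
  unfolding msqrt_def by (rule mfun_kron) (auto simp: real_sqrt_mult)

lemma mlog_kron:
  assumes A: "pos_def A" and B: "pos_def B"
  shows "mlog (kron A B) = kron (mlog A) (mat 1) + kron (mat 1) (mlog B)"
proof -
  obtain U a where U: "unitary U" "A = U ** rdiag a ** adj U" "\<forall>i. a i > 0"
    using pos_def_spectral[OF A] by blast
  obtain V b where V: "unitary V" "B = V ** rdiag b ** adj V" "\<forall>i. b i > 0"
    using pos_def_spectral[OF B] by blast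
  have "kron A B = kron U V ** rdiag (\<lambda>p. a (fst p) * b (snd p)) ** adj (kron U V)"
    unfolding U(2) V(2) by (rule kron_spectral_form)
  then have "mlog (kron A B) = kron U V ** rdiag (\<lambda>p. ln (a (fst p) * b (snd p))) ** adj (kron U V)"
    by (rule mlog_spectral[OF unitary_kron[OF U(1) V(1)]])
  also have "(\<lambda>p. ln (a (fst p) * b (snd p))) =
      (\<lambda>p. ln (a (fst p)) * 1 + 1 * ln (b (snd p)))"
  proof
    fix p :: "'a \<times> 'b"
    have "a (fst p) > 0" "b (snd p) > 0" using U(3) V(3) by auto
    then show "ln (a (fst p) * b (snd p)) = ln (a (fst p)) * 1 + 1 * ln (b (snd p))" by (simp add: ln_mult)
  qed
  also have "rdiag \<dots> =
      kron (rdiag (\<lambda>i. ln (a i))) (rdiag (\<lambda>_. 1)) + kron (rdiag (\<lambda>_. 1)) (rdiag (\<lambda>j. ln (b j)))"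
    by (simp add: vec_eq_iff rdiag_def kron_def)
  finally show ?thesis
    using unitaryD[OF U(1)] unitaryD[OF V(1)]
    by (simp add: mlog_spectral[OF U(1,2)] mlog_spectral[OF V(1,2)] kron_mult adj_kron
        matrix_add_ldistrib matrix_mult_add_left rdiag_1)
qed


theorem full_rank_state_Estar:
  assumes \<sigma>: "full_rank_state \<sigma>" and \<rho>: "full_rank_state \<rho>"
  shows "full_rank_state (Estar \<sigma> \<rho>)"
proof -
  define S where "S = msqrt \<sigma>"
  define N where "N = minvsqrt (ptrA \<sigma>)"
  define M where "M = N ** ptrA \<rho> ** N"
  define K :: "('a \<times> 'b) cmat" where "K = kron (mat 1) M"
  have \<sigma>_pd: "pos_def \<sigma>" and \<sigma>B_pd: "pos_def (ptrA \<sigma>)" and \<rho>B_pd: "pos_def (ptrA \<rho>)"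
    using \<sigma> \<rho> by (auto simp: full_rank_state_def pos_def_ptrA)
  have S_herm: "adj S = S" and N_herm: "adj N = N"
    unfolding S_def N_def msqrt_def minvsqrt_def
    using \<sigma>_pd \<sigma>B_pd by (simp_all add: hermitian_adj_eq hermitian_mfun pos_def_hermitian)
  have "pos_def M"
    using pos_def_congruence[OF \<rho>B_pd msqrt_mult_minvsqrt[OF \<sigma>B_pd]]
    by (simp add: M_def N_def[symmetric] N_herm)
  then have "pos_def K" unfolding K_def by (rule pos_def_kron[OF pos_def_mat_1])
  have E: "Estar \<sigma> \<rho> = adj S ** K ** S"
    by (simp add: Estar_def S_def N_def M_def K_def S_herm[unfolded S_def])
  have "pos_def (Estar \<sigma> \<rho>)"
    unfolding E S_def
    by (rule pos_def_congruence[OF \<open>pos_def K\<close> minvsqrt_mult_msqrt[OF \<sigma>_pd]])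
  moreover have "trace (Estar \<sigma> \<rho>) = 1"
  proof -
    have "trace (Estar \<sigma> \<rho>) = trace (S ** (K ** S))" by (simp add: E S_herm matrix_mul_assoc)
    also have "\<dots> = trace ((K ** S) ** S)" by (rule trace_mul_sym)
    also have "\<dots> = trace (M ** ptrA \<sigma>)"
      by (simp add: matrix_mul_assoc[symmetric] S_def msqrt_mult_self[OF \<sigma>_pd] K_def trace_kron_mat_1_left)
    also have "\<dots> = trace (N ** (ptrA \<rho> ** N ** ptrA \<sigma>))" by (simp add: M_def matrix_mul_assoc)
    also have "\<dots> = trace ((ptrA \<rho> ** N ** ptrA \<sigma>) ** N)" by (rule trace_mul_sym)
    also have "\<dots> = trace (ptrA \<rho> ** (N ** ptrA \<sigma> ** N))" by (simp add: matrix_mul_assoc)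
    also have "\<dots> = 1"
      using \<rho> by (simp add: N_def minvsqrt_sandwich[OF \<sigma>B_pd] trace_ptrA full_rank_state_def)
    finally show ?thesis .
  qed
  ultimately show ?thesis by (simp add: full_rank_state_def)
qed

theorem Estar_kron:
  assumes \<sigma>A: "full_rank_state \<sigma>A" and \<sigma>B: "full_rank_state \<sigma>B"
  shows "Estar (kron \<sigma>A \<sigma>B) \<rho> = kron \<sigma>A (ptrA \<rho>)"
proof -
  have A: "pos_def \<sigma>A" and B: "pos_def \<sigma>B" and "trace \<sigma>A = 1"
    using \<sigma>A \<sigma>B by (auto simp: full_rank_state_def)
  then have "Estar (kron \<sigma>A \<sigma>B) \<rho> =
      kron (msqrt \<sigma>A ** msqrt \<sigma>A) ((msqrt \<sigma>B ** minvsqrt \<sigma>B) ** ptrA \<rho> ** (minvsqrt \<sigma>B ** msqrt \<sigma>B))"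
    by (simp add: Estar_def ptrA_kron msqrt_kron kron_mult matrix_mul_assoc)
  also have "\<dots> = kron \<sigma>A (ptrA \<rho>)"
    by (simp add: msqrt_mult_self[OF A] msqrt_mult_minvsqrt[OF B] minvsqrt_mult_msqrt[OF B])
  finally show ?thesis .
qed


definition trace_log :: "'n::finite cmat \<Rightarrow> 'n cmat \<Rightarrow> real" where
  "trace_log \<rho> X = Re (trace (\<rho> ** mlog X))"

lemma rel_ent_trace_log: "rel_ent \<rho> \<sigma> = trace_log \<rho> \<rho> - trace_log \<rho> \<sigma>"
  by (simp add: rel_ent_def trace_log_def matrix_mult_diff_right trace_sub)

lemma trace_log_kron:
  assumes "pos_def X" and "pos_def Y"
  shows "trace_log \<rho> (kron X Y) = trace_log (ptrB \<rho>) X + trace_log (ptrA \<rho>) Y"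
proof -
  have "trace (\<rho> ** mlog (kron X Y)) =
      trace (\<rho> ** kron (mlog X) (mat 1)) + trace (\<rho> ** kron (mat 1) (mlog Y))"
    by (simp add: mlog_kron assms matrix_add_ldistrib trace_add)
  also have "\<dots> = trace (kron (mlog X) (mat 1) ** \<rho>) + trace (kron (mat 1) (mlog Y) ** \<rho>)"
    by (simp only: trace_mul_sym[of \<rho>])
  also have "\<dots> = trace (mlog X ** ptrB \<rho>) + trace (mlog Y ** ptrA \<rho>)"
    by (simp only: trace_kron_mat_1_left trace_kron_mat_1_right)
  also have "\<dots> = trace (ptrB \<rho> ** mlog X) + trace (ptrA \<rho> ** mlog Y)"
    by (simp only: trace_mul_sym[of "mlog _"])
  finally show ?thesis by (simp add: trace_log_def)
qed

text \<open>Recall that ptrB rho is rho_A and ptrA rho is rho_B.\<close>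

lemma rel_ent_kron_ptrA:
  assumes \<rho>: "full_rank_state \<rho>" and \<sigma>A: "pos_def \<sigma>A"
  shows "rel_ent \<rho> (kron \<sigma>A (ptrA \<rho>)) = rel_ent \<rho> (kron (ptrB \<rho>) (ptrA \<rho>)) + rel_ent (ptrB \<rho>) \<sigma>A"
  using \<rho> \<sigma>A
  by (simp add: rel_ent_trace_log trace_log_kron full_rank_state_def pos_def_ptrA pos_def_ptrB)


section \<open>Continuity\<close>

lemma tendsto_matrix_mult [tendsto_intros]:
  "(f \<longlongrightarrow> A) F \<Longrightarrow> (g \<longlongrightarrow> B) F \<Longrightarrow> ((\<lambda>x. f x ** g x :: complex^'n::finite^'m::finite) \<longlongrightarrow> A ** B) F"
  unfolding matrix_matrix_mult_def by (intro tendsto_intros)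

lemma tendsto_adj [tendsto_intros]: "(f \<longlongrightarrow> A) F \<Longrightarrow> ((\<lambda>x. adj (f x)) \<longlongrightarrow> adj A) F"
  unfolding adj_def by (intro tendsto_intros)

lemma tendsto_rdiag [tendsto_intros]:
  "(\<And>i. ((\<lambda>x. d x i) \<longlongrightarrow> e i) F) \<Longrightarrow> ((\<lambda>x. rdiag (d x)) \<longlongrightarrow> rdiag e) F"
  unfolding rdiag_def by (intro tendsto_intros) (auto intro: tendsto_of_real)

lemma tendsto_kron [tendsto_intros]:
  "(f \<longlongrightarrow> A) F \<Longrightarrow> (g \<longlongrightarrow> B) F \<Longrightarrow> ((\<lambda>x. kron (f x) (g x)) \<longlongrightarrow> kron A B) F"
  unfolding kron_def by (intro tendsto_intros)

lemma tendsto_ptrA [tendsto_intros]: "(f \<longlongrightarrow> A) F \<Longrightarrow> ((\<lambda>x. ptrA (f x)) \<longlongrightarrow> ptrA A) F"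
  unfolding ptrA_def by (intro tendsto_intros)

lemma tendsto_trace [tendsto_intros]:
  "(f \<longlongrightarrow> A) F \<Longrightarrow> ((\<lambda>x. trace (f x :: 'n::finite cmat)) \<longlongrightarrow> trace A) F"
  unfolding trace_def by (intro tendsto_intros)

lemma tendsto_qform [tendsto_intros]:
  "(f \<longlongrightarrow> A) F \<Longrightarrow> (g \<longlongrightarrow> v) F \<Longrightarrow> ((\<lambda>x. qform (f x) (g x)) \<longlongrightarrow> qform A v) F"
  unfolding qform_def by (intro tendsto_intros)

lemma tendsto_column [tendsto_intros]:
  "(f \<longlongrightarrow> A) F \<Longrightarrow> ((\<lambda>x. column i (f x)) \<longlongrightarrow> column i A) F"
  unfolding column_def by (intro tendsto_intros)

lemma compact_unitary: "compact {U::'n::finite cmat. unitary U}"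
proof -
  have "norm U = sqrt (real CARD('n))" if "unitary U" for U :: "'n cmat"
    using unitary_row_norm[OF that] by (simp add: norm_vec_def L2_set_def norm_vec_power2)
  then have "bounded {U::'n cmat. unitary U}"
    unfolding bounded_iff by fastforce
  moreover have "closed {U::'n cmat. unitary U}"
    unfolding unitary_def Collect_conj_eq
    by (intro closed_Int closed_Collect_eq continuous_on_const)
      (simp_all add: matrix_matrix_mult_def adj_def continuous_on_vec_lambda continuous_intros)
  ultimately show ?thesis by (simp add: compact_eq_bounded_closed)
qed

lemma mfun_tendsto_subseq:
  fixes X :: "nat \<Rightarrow> 'n::finite cmat"
  assumes f: "continuous_on {0<..} f"
    and X: "X \<longlonglongrightarrow> A" and X_pd: "\<And>n. pos_def (X n)" and A_pd: "pos_def A"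
  shows "\<exists>t. strict_mono t \<and> (\<lambda>n. mfun f (X (t n))) \<longlonglongrightarrow> mfun f A"
proof -
  obtain U d where U: "\<And>n. unitary (U n)" and X_eq: "\<And>n. X n = U n ** rdiag (d n) ** adj (U n)"
    using pos_def_spectral[OF X_pd] by metis
  obtain U0 t where U0: "unitary U0" and t: "strict_mono t" and Ut: "(\<lambda>n. U (t n)) \<longlonglongrightarrow> U0"
    using compact_imp_seq_compact[OF compact_unitary] U unfolding seq_compact_def comp_def
    by (metis mem_Collect_eq)
  have Xt: "(\<lambda>n. X (t n)) \<longlonglongrightarrow> A"
    using LIMSEQ_subseq_LIMSEQ[OF X t] by (simp add: comp_def)
  define d0 where "d0 i = Re (qform A (column i U0))" for i
  have dt: "(\<lambda>n. d (t n) i) \<longlonglongrightarrow> d0 i" for i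
    unfolding spectral_form_eigenvalue[OF U X_eq] d0_def by (intro tendsto_intros Xt Ut)
  have d0_pos: "d0 i > 0" for i
    using A_pd unitary_column_nonzero[OF U0] by (simp add: d0_def pos_def_iff)
  have "(\<lambda>n. X (t n)) \<longlonglongrightarrow> U0 ** rdiag d0 ** adj U0"
    unfolding X_eq by (intro tendsto_intros Ut dt)
  then have A_eq: "A = U0 ** rdiag d0 ** adj U0" using Xt LIMSEQ_unique by blast
  have "isCont f (d0 i)" for i
    using f d0_pos[of i] by (simp add: continuous_on_eq_continuous_at)
  then have "(\<lambda>n. U (t n) ** rdiag (f \<circ> d (t n)) ** adj (U (t n))) \<longlonglongrightarrow> U0 ** rdiag (f \<circ> d0) ** adj U0"
    unfolding comp_def by (intro tendsto_intros Ut isCont_tendsto_compose[OF _ dt])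
  then show ?thesis
    using t by (auto simp: mfun_spectral[OF U X_eq] mfun_spectral[OF U0 A_eq])
qed

lemma continuous_on_mfun:
  assumes f: "continuous_on {0<..} f"
  shows "continuous_on {A::'n::finite cmat. pos_def A} (mfun f)"
  unfolding continuous_on_sequentially comp_def
proof (intro allI ballI impI)
  fix X :: "nat \<Rightarrow> 'n cmat" and A
  assume "A \<in> {A. pos_def A}" and "(\<forall>n. X n \<in> {A. pos_def A}) \<and> X \<longlonglongrightarrow> A"
  then have A_pd: "pos_def A" and X_pd: "\<And>n. pos_def (X n)" and X: "X \<longlonglongrightarrow> A" by auto
  show "(\<lambda>n. mfun f (X n)) \<longlonglongrightarrow> mfun f A"
  proof (rule ccontr)
    assume "\<not> (\<lambda>n. mfun f (X n)) \<longlonglongrightarrow> mfun f A"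
    then obtain e where "e > 0" and "infinite {n. \<not> dist (mfun f (X n)) (mfun f A) < e}"
      by (auto simp: tendsto_iff not_eventually INFM_iff_infinite cofinite_eq_sequentially[symmetric])
    then obtain s :: "nat \<Rightarrow> nat" where far: "\<And>n. \<not> dist (mfun f (X (s n))) (mfun f A) < e"
      and "strict_mono s"
      using enumerate_in_set enumerate_mono by (fastforce simp: strict_mono_def)
    have "(\<lambda>n. X (s n)) \<longlonglongrightarrow> A"
      using LIMSEQ_subseq_LIMSEQ[OF X \<open>strict_mono s\<close>] by (simp add: comp_def)
    then obtain t where "(\<lambda>n. mfun f (X (s (t n)))) \<longlonglongrightarrow> mfun f A"
      using mfun_tendsto_subseq[OF f _ X_pd A_pd] by blast
    then have "eventually (\<lambda>n. dist (mfun f (X (s (t n)))) (mfun f A) < e) sequentially"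
      using \<open>e > 0\<close> by (rule tendstoD)
    then show False using far by (auto simp: eventually_sequentially)
  qed
qed

lemma continuous_on_mlog: "continuous_on {A::'n::finite cmat. pos_def A} mlog"
  unfolding mlog_def[abs_def] by (rule continuous_on_mfun) (intro continuous_intros, auto)

lemma continuous_on_Estar: "continuous_on UNIV (Estar \<sigma>)"
  unfolding continuous_on_def Estar_def by (intro ballI tendsto_intros)


theorem continuous_on_DEA:
  assumes \<sigma>: "full_rank_state \<sigma>"
  shows "continuous_on {\<rho>. full_rank_state \<rho>} (\<lambda>\<rho>. DEA \<rho> \<sigma>)"
proof -
  let ?S = "{\<rho>. full_rank_state \<rho>}"
  have "?S \<subseteq> {A. pos_def A}" by (auto simp: full_rank_state_def)
  then have log: "continuous_on ?S mlog" by (rule continuous_on_subset[OF continuous_on_mlog])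
  have "Estar \<sigma> ` ?S \<subseteq> {A. pos_def A}"
    using full_rank_state_Estar[OF \<sigma>] by (auto simp: full_rank_state_def)
  then have log_Estar: "continuous_on ?S (\<lambda>\<rho>. mlog (Estar \<sigma> \<rho>))"
    by (intro continuous_on_compose2[OF continuous_on_mlog continuous_on_subset[OF continuous_on_Estar]])
      auto
  show ?thesis
    unfolding DEA_def rel_ent_def continuous_on_def
    using log log_Estar unfolding continuous_on_def
    by (intro ballI tendsto_intros tendsto_ident_at) auto
qed

theorem DEA_nonneg_eq_0_iff:
  assumes "full_rank_state \<sigma>" and "full_rank_state \<rho>"
  shows "DEA \<rho> \<sigma> \<ge> 0 \<and> (DEA \<rho> \<sigma> = 0 \<longleftrightarrow> \<rho> = Estar \<sigma> \<rho>)"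
  using klein_inequality[OF assms(2) full_rank_state_Estar[OF assms]] by (simp add: DEA_def)

theorem DEA_kron_ge:
  assumes \<sigma>A: "full_rank_state \<sigma>A" and \<sigma>B: "full_rank_state \<sigma>B" and \<rho>: "full_rank_state \<rho>"
  shows "DEA \<rho> (kron \<sigma>A \<sigma>B) \<ge> rel_ent (ptrB \<rho>) \<sigma>A"
proof -
  have "DEA \<rho> (kron \<sigma>A \<sigma>B) = rel_ent \<rho> (kron (ptrB \<rho>) (ptrA \<rho>)) + rel_ent (ptrB \<rho>) \<sigma>A"
    using \<rho> \<sigma>A by (simp add: DEA_def Estar_kron[OF \<sigma>A \<sigma>B] rel_ent_kron_ptrA full_rank_state_def)
  moreover have "rel_ent \<rho> (kron (ptrB \<rho>) (ptrA \<rho>)) \<ge> 0"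
    by (intro klein_inequality full_rank_state_kron full_rank_state_ptrA full_rank_state_ptrB \<rho>)
  ultimately show ?thesis by simp
qed

theorem DEA_kron_kron:
  assumes \<sigma>A: "full_rank_state \<sigma>A" and \<sigma>B: "full_rank_state \<sigma>B"
    and \<rho>A: "full_rank_state \<rho>A" and \<rho>B: "full_rank_state \<rho>B"
  shows "DEA (kron \<rho>A \<rho>B) (kron \<sigma>A \<sigma>B) = rel_ent \<rho>A \<sigma>A"
proof -
  have "trace \<rho>A = 1" "trace \<rho>B = 1" using \<rho>A \<rho>B by (auto simp: full_rank_state_def)
  then show ?thesis
    using \<sigma>A \<rho>A \<rho>B
    by (simp add: DEA_def Estar_kron[OF \<sigma>A \<sigma>B] ptrA_kron ptrB_kron rel_ent_trace_log trace_log_kron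
        pos_def_kron full_rank_state_def)
qed

theorem mainTheorem2:
  fixes \<sigma> :: "('a::finite \<times> 'b::finite) cmat"
    and \<sigma>A :: "'a cmat" and \<sigma>B :: "'b cmat"
  shows
    "(full_rank_state \<sigma> \<longrightarrow>
       continuous_on {\<rho>. full_rank_state \<rho>} (\<lambda>\<rho>. DEA \<rho> \<sigma>))
    \<and> (full_rank_state \<sigma> \<longrightarrow> (\<forall>\<rho>. full_rank_state \<rho> \<longrightarrow>
       DEA \<rho> \<sigma> \<ge> 0 \<and> (DEA \<rho> \<sigma> = 0 \<longleftrightarrow> \<rho> = Estar \<sigma> \<rho>)))
    \<and> (full_rank_state \<sigma>A \<longrightarrow> full_rank_state \<sigma>B \<longrightarrow> (\<forall>\<rho>. full_rank_state \<rho> \<longrightarrow>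
       DEA \<rho> (kron \<sigma>A \<sigma>B) \<ge> rel_ent (ptrB \<rho>) \<sigma>A))
    \<and> (full_rank_state \<sigma>A \<longrightarrow> full_rank_state \<sigma>B \<longrightarrow>
       (\<forall>\<rho>A \<rho>B. full_rank_state \<rho>A \<longrightarrow> full_rank_state \<rho>B \<longrightarrow>
       DEA (kron \<rho>A \<rho>B) (kron \<sigma>A \<sigma>B) = rel_ent \<rho>A \<sigma>A))"
proof (intro conjI impI allI)
  show "continuous_on {\<rho>. full_rank_state \<rho>} (\<lambda>\<rho>. DEA \<rho> \<sigma>)" if "full_rank_state \<sigma>"
    using that by (rule continuous_on_DEA)
  show "DEA \<rho> \<sigma> \<ge> 0" and "DEA \<rho> \<sigma> = 0 \<longleftrightarrow> \<rho> = Estar \<sigma> \<rho>"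
    if "full_rank_state \<sigma>" and "full_rank_state \<rho>" for \<rho>
    using DEA_nonneg_eq_0_iff[OF that] by simp_all
  show "DEA \<rho> (kron \<sigma>A \<sigma>B) \<ge> rel_ent (ptrB \<rho>) \<sigma>A"
    if "full_rank_state \<sigma>A" and "full_rank_state \<sigma>B" and "full_rank_state \<rho>" for \<rho>
    using that by (rule DEA_kron_ge)
  show "DEA (kron \<rho>A \<rho>B) (kron \<sigma>A \<sigma>B) = rel_ent \<rho>A \<sigma>A"
    if "full_rank_state \<sigma>A" "full_rank_state \<sigma>B" "full_rank_state \<rho>A" "full_rank_state \<rho>B"
    for \<rho>A :: "'a cmat" and \<rho>B :: "'b cmat"
    using that by (rule DEA_kron_kron)
qed

end
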